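(* Let $G$ be a connected graph and $(u,v)\in V_p$. Then $r_w(u,v)=0$ for all $w\in V(G)\setminus\{u,v\}$ if and only if $V_i(u)\setminus\{v\}=V_i(v)\setminus\{u\}$ for every $1\le i\le\mathrm{diam}(G)$, where $V_i(x)=\{y\in V(G)\setminus\{x\}: d(x,y)=i\}$.
   Context: Graphs are finite, simple and connected; $d(u,v)$ denotes the shortest-path distance. $V_p$ denotes the set of all unordered pairs $(u,v)$ of distinct vertices. A vertex $x$ resolves the pair $(u,v)$ if $d(x,u)\neq d(x,v)$. For $(u,v)\in V_p$, $R(u,v)$ is the set of all vertices resolving $(u,v)$. The resolving share of a vertex $w$ for $(u,v)$ is $r_w(u,v)=\frac{1}{|R(u,v)|}$ if $w$ resolves $u$ and $v$, and $r_w(u,v)=0$ otherwise. (In the paper the condition $V_i(u)\setminus\{v\}=V_i(v)\setminus\{u\}$ for all $i$ is written $\Pi_u-\{v\}=\Pi_v-\{u\}$, where $\Pi_x=\{V_i(x):1\le i\le \mathrm{diam}(G)\}$ is the distance partition with respect to $x$.) *)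

theory Defs
  imports Main "HOL-Library.Extended_Real" Complex_Main
begin

definition simple_graph :: "'a set \<Rightarrow> ('a \<Rightarrow> 'a \<Rightarrow> bool) \<Rightarrow> bool" where
  "simple_graph V E \<longleftrightarrow> finite V \<and> V \<noteq> {} \<and>
     (\<forall>x y. E x y \<longrightarrow> x \<in> V \<and> y \<in> V) \<and>
     (\<forall>x y. E x y \<longrightarrow> E y x) \<and> (\<forall>x. \<not> E x x)"

definition walk :: "('a \<Rightarrow> 'a \<Rightarrow> bool) \<Rightarrow> 'a list \<Rightarrow> bool" where
  "walk E p \<longleftrightarrow> p \<noteq> [] \<and> (\<forall>i. Suc i < length p \<longrightarrow> E (p ! i) (p ! Suc i))"

definition has_walk :: "('a \<Rightarrow> 'a \<Rightarrow> bool) \<Rightarrow> 'a \<Rightarrow> 'a \<Rightarrow> nat \<Rightarrow> bool" where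
  "has_walk E x y n \<longleftrightarrow> (\<exists>p. walk E p \<and> hd p = x \<and> last p = y \<and> length p = Suc n)"

definition connected_graph :: "'a set \<Rightarrow> ('a \<Rightarrow> 'a \<Rightarrow> bool) \<Rightarrow> bool" where
  "connected_graph V E \<longleftrightarrow> simple_graph V E \<and>
     (\<forall>x\<in>V. \<forall>y\<in>V. \<exists>n. has_walk E x y n)"

text \<open>Shortest-path distance (meaningful for vertices of a connected graph).\<close>
definition gdist :: "('a \<Rightarrow> 'a \<Rightarrow> bool) \<Rightarrow> 'a \<Rightarrow> 'a \<Rightarrow> nat" where
  "gdist E x y = (LEAST n. has_walk E x y n)"

definition diam :: "'a set \<Rightarrow> ('a \<Rightarrow> 'a \<Rightarrow> bool) \<Rightarrow> nat" where
  "diam V E = Max {gdist E x y | x y. x \<in> V \<and> y \<in> V}"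

definition dist_layer :: "'a set \<Rightarrow> ('a \<Rightarrow> 'a \<Rightarrow> bool) \<Rightarrow> 'a \<Rightarrow> nat \<Rightarrow> 'a set" where
  "dist_layer V E x i = {y \<in> V - {x}. gdist E x y = i}"

definition resolves :: "('a \<Rightarrow> 'a \<Rightarrow> bool) \<Rightarrow> 'a \<Rightarrow> 'a \<Rightarrow> 'a \<Rightarrow> bool" where
  "resolves E x u v \<longleftrightarrow> gdist E x u \<noteq> gdist E x v"

definition resolving_set_of :: "'a set \<Rightarrow> ('a \<Rightarrow> 'a \<Rightarrow> bool) \<Rightarrow> 'a \<Rightarrow> 'a \<Rightarrow> 'a set" where
  "resolving_set_of V E u v = {x \<in> V. resolves E x u v}"

definition resolving_share :: "'a set \<Rightarrow> ('a \<Rightarrow> 'a \<Rightarrow> bool) \<Rightarrow> 'a \<Rightarrow> 'a \<Rightarrow> 'a \<Rightarrow> real" where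
  "resolving_share V E w u v =
     (if resolves E w u v then 1 / real (card (resolving_set_of V E u v)) else 0)"

end

theory Submission
  imports Defs
begin

text \<open>A vertex w other than u, v has zero resolving share exactly when it does not resolve
  (u, v), i.e. when d(u, w) = d(v, w). Every such w lies in some layer V_i(u) with
  1 \<le> i \<le> diam G, so equality of the layers outside {u, v} says the same thing.\<close>

lemma walk_rev:
  assumes "\<And>x y. E x y \<Longrightarrow> E y x" and "walk E p"
  shows "walk E (rev p)"
  unfolding walk_def
proof (intro conjI allI impI)
  show "rev p \<noteq> []" using assms(2) by (simp add: walk_def)
  fix i assume i: "Suc i < length (rev p)"
  have "E (p ! (length p - Suc (Suc i))) (p ! Suc (length p - Suc (Suc i)))"
    using assms(2) i by (auto simp: walk_def)
  moreover have "Suc (length p - Suc (Suc i)) = length p - Suc i" using i by simp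
  ultimately show "E (rev p ! i) (rev p ! Suc i)" using assms(1) i by (auto simp: rev_nth)
qed

lemma has_walk_sym:
  assumes "\<And>x y. E x y \<Longrightarrow> E y x" and "has_walk E x y n"
  shows "has_walk E y x n"
proof -
  obtain p where p: "walk E p" "hd p = x" "last p = y" "length p = Suc n"
    using assms(2) by (auto simp: has_walk_def)
  have "p \<noteq> []" using p(1) by (simp add: walk_def)
  then show ?thesis
    using p walk_rev[OF assms(1) p(1)] unfolding has_walk_def
    by (intro exI[of _ "rev p"]) (auto simp: hd_rev last_rev)
qed

lemma gdist_sym:
  assumes "\<And>x y. E x y \<Longrightarrow> E y x"
  shows "gdist E x y = gdist E y x"
proof -
  have "has_walk E x y = has_walk E y x"
    using has_walk_sym[of E, OF assms] by blast
  then show ?thesis unfolding gdist_def by simp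
qed

lemma has_walk_0_eq: "has_walk E x y 0 \<Longrightarrow> x = y"
  unfolding has_walk_def by (auto simp: length_Suc_conv)

lemma gdist_pos:
  assumes "has_walk E x y n" and "x \<noteq> y"
  shows "0 < gdist E x y"
proof (rule ccontr)
  assume "\<not> 0 < gdist E x y"
  moreover have "has_walk E x y (gdist E x y)"
    unfolding gdist_def using assms(1) by (rule LeastI)
  ultimately have "has_walk E x y 0" by simp
  with assms(2) show False by (auto dest: has_walk_0_eq)
qed

lemma gdist_le_diam:
  assumes "finite V" and "x \<in> V" and "y \<in> V"
  shows "gdist E x y \<le> diam V E"
proof -
  have "{gdist E x y | x y. x \<in> V \<and> y \<in> V} = (\<lambda>(x, y). gdist E x y) ` (V \<times> V)" by auto
  then have "finite {gdist E x y | x y. x \<in> V \<and> y \<in> V}" using assms(1) by simp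
  then show ?thesis unfolding diam_def using assms(2,3) by (intro Max_ge) auto
qed

lemma resolving_share_eq_0_iff:
  assumes "finite V" and "w \<in> V"
  shows "resolving_share V E w u v = 0 \<longleftrightarrow> \<not> resolves E w u v"
proof -
  have "finite (resolving_set_of V E u v)"
    using assms(1) by (simp add: resolving_set_of_def)
  moreover have "resolves E w u v \<Longrightarrow> w \<in> resolving_set_of V E u v"
    using assms(2) by (simp add: resolving_set_of_def)
  ultimately have "resolves E w u v \<Longrightarrow> card (resolving_set_of V E u v) > 0"
    using card_gt_0_iff by blast
  then show ?thesis by (auto simp: resolving_share_def)
qed

lemma dist_layers_eq_iff:
  assumes "connected_graph V E" and "u \<in> V" and "v \<in> V"
  shows "(\<forall>i. 1 \<le> i \<and> i \<le> diam V E \<longrightarrow> dist_layer V E u i - {v} = dist_layer V E v i - {u})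
    \<longleftrightarrow> (\<forall>w \<in> V - {u, v}. gdist E u w = gdist E v w)"
proof
  assume layers: "\<forall>i. 1 \<le> i \<and> i \<le> diam V E \<longrightarrow> dist_layer V E u i - {v} = dist_layer V E v i - {u}"
  show "\<forall>w \<in> V - {u, v}. gdist E u w = gdist E v w"
  proof
    fix w assume w: "w \<in> V - {u, v}"
    let ?i = "gdist E u w"
    obtain n where "has_walk E u w n"
      using assms w by (auto simp: connected_graph_def)
    then have "1 \<le> ?i" using w gdist_pos by fastforce
    moreover have "?i \<le> diam V E"
      using assms w by (intro gdist_le_diam) (auto simp: connected_graph_def simple_graph_def)
    moreover have "w \<in> dist_layer V E u ?i - {v}" using w by (simp add: dist_layer_def)
    ultimately have "w \<in> dist_layer V E v ?i - {u}" using layers by blast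
    then show "gdist E u w = gdist E v w" by (simp add: dist_layer_def)
  qed
qed (auto simp: dist_layer_def)

theorem lemma2p4:
  fixes V :: "'a set" and E :: "'a \<Rightarrow> 'a \<Rightarrow> bool" and u v :: 'a
  assumes "connected_graph V E"
    and "u \<in> V" and "v \<in> V" and "u \<noteq> v"
  shows "(\<forall>w \<in> V - {u, v}. resolving_share V E w u v = 0) \<longleftrightarrow>
         (\<forall>i. 1 \<le> i \<and> i \<le> diam V E \<longrightarrow>
              dist_layer V E u i - {v} = dist_layer V E v i - {u})"
proof -
  have sym: "\<And>x y. E x y \<Longrightarrow> E y x" and fin: "finite V"
    using assms(1) by (auto simp: connected_graph_def simple_graph_def)
  have "(\<forall>w \<in> V - {u, v}. resolving_share V E w u v = 0)
      \<longleftrightarrow> (\<forall>w \<in> V - {u, v}. gdist E u w = gdist E v w)"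
    using resolving_share_eq_0_iff[OF fin, of _ E u v] gdist_sym[of E, OF sym]
    by (auto simp: resolves_def)
  also have "\<dots> \<longleftrightarrow> (\<forall>i. 1 \<le> i \<and> i \<le> diam V E \<longrightarrow>
              dist_layer V E u i - {v} = dist_layer V E v i - {u})"
    using dist_layers_eq_iff[OF assms(1-3)] by simp
  finally show ?thesis .
qed

end
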